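(* Let $F$ be a topological hyperfield and $*\in\{s,w\}$. Let $M$ be a rank $r$ matroid on a finite set $E$ such that $\operatorname{Real}^*_F(M)\ne\emptyset$, and let $A\subseteq E$ have $r+1$ elements. Let $\tilde\varphi:A^r\to F$ be an alternating function that is nonzero exactly on the ordered bases of $M$ contained in $A$. Then there is a Grassmann–Plücker function $\varphi:E^r\to F$ of the appropriate type ($*$) that extends $\tilde\varphi$ and satisfies $[\varphi]\in\operatorname{Real}^*_F(M)$.
   Context: Hyperfields. A hyperfield $(F,\odot,\boxplus,1,0)$ has the following data and axioms. - $\odot$ is a commutative multiplication and $\boxplus$ is a hyperaddition assigning to each $x,y$ a nonempty subset $x\boxplus y\subseteq F$ (extended to subsets by unions). - $\boxplus$ is commutative and associative, and $x\boxplus 0=\{x\}$. - Each $x$ has a unique $-x$ with $0\in x\boxplus(-x)$, and $x\in y\boxplus z \iff z\in x\boxplus(-y)$. - $(F\setminus\{0\},\odot,1)$ is an abelian group $F^\times$, $0\odot x=0$, and $x\odot(y\boxplus z)=(x\odot y)\boxplus(x\odot z)$. A topological hyperfield is a hyperfield with a topology in which $F\setminus\{0\}$ is open, multiplication is continuous, and inversion on $F^\times$ is continuous. Grassmannians. A function $\varphi:E^r\to F$ is alternating if permuting arguments by $\sigma$ multiplies the value by $\operatorname{sign}\sigma$. A strong Grassmann–Plücker (GP) function of rank $r$ on $E$ is a function $\varphi:E^r\to F$ with the following properties. - $\varphi$ is not identically $0$. - $\varphi$ is alternating. - For all $(i_1,\dots,i_{r+1})\in E^{r+1}$ and $(j_1,\dots,j_{r-1})\in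 E^{r-1}$: $$0\in\boxplus_{k=1}^{r+1}(-1)^k\varphi(i_1,\dots,\widehat{i_k},\dots,i_{r+1})\odot\varphi(i_k,j_1,\dots,j_{r-1}).$$ A weak GP function is a function $\varphi:E^r\to F$ with the following properties. - $\varphi$ is nonzero and alternating. - Its support is the set of bases of a matroid. - The relation holds when $|\{i\}\setminus\{j\}|=3$. $\operatorname{Gr}^*(r,F^E)$ is the set of strong ($*=s$) or weak ($*=w$) GP functions modulo $\varphi\sim\alpha\varphi$, $\alpha\in F^\times$. Realization spaces. For a matroid $M$ on $E$ of rank $r$, $\operatorname{Real}^*_F(M)$ is the set of $[\varphi]\in\operatorname{Gr}^*(r,F^E)$ such that $\varphi$ is nonzero exactly on the ordered bases of $M$. An ordered basis is an $r$-tuple of distinct elements whose underlying set is a basis. *)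

theory Defs
  imports "HOL-Analysis.Analysis" "HOL-Combinatorics.Permutations"
begin

definition hset_plus :: "('a \<Rightarrow> 'a \<Rightarrow> 'a set) \<Rightarrow> 'a set \<Rightarrow> 'a set \<Rightarrow> 'a set" where
  "hset_plus hp X Y = (\<Union>x\<in>X. \<Union>y\<in>Y. hp x y)"

definition hyperfield ::
  "('a \<Rightarrow> 'a \<Rightarrow> 'a) \<Rightarrow> ('a \<Rightarrow> 'a \<Rightarrow> 'a set) \<Rightarrow> 'a \<Rightarrow> 'a \<Rightarrow> bool" where
  "hyperfield mul hp one zero \<longleftrightarrow>
     (\<forall>x y. mul x y = mul y x) \<and>
     (\<forall>x y. hp x y \<noteq> {}) \<and>
     (\<forall>x y. hp x y = hp y x) \<and>
     (\<forall>x y z. hset_plus hp (hp x y) {z} = hset_plus hp {x} (hp y z)) \<and>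
     (\<forall>x. hp x zero = {x}) \<and>
     (\<forall>x. \<exists>!y. zero \<in> hp x y) \<and>
     (\<forall>x y z. x \<in> hp y z \<longleftrightarrow> z \<in> hp x (THE y'. zero \<in> hp y y')) \<and>

     one \<noteq> zero \<and>
     (\<forall>x y. x \<noteq> zero \<longrightarrow> y \<noteq> zero \<longrightarrow> mul x y \<noteq> zero) \<and>
     (\<forall>x y z. x \<noteq> zero \<longrightarrow> y \<noteq> zero \<longrightarrow> z \<noteq> zero \<longrightarrow>
        mul (mul x y) z = mul x (mul y z)) \<and>
     (\<forall>x. x \<noteq> zero \<longrightarrow> mul one x = x) \<and>
     (\<forall>x. x \<noteq> zero \<longrightarrow> (\<exists>y. y \<noteq> zero \<and> mul x y = one)) \<and>
     (\<forall>x. mul zero x = zero) \<and>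
     (\<forall>x y z. mul x ` (hp y z) = hp (mul x y) (mul x z))"

definition hneg :: "('a \<Rightarrow> 'a \<Rightarrow> 'a set) \<Rightarrow> 'a \<Rightarrow> 'a \<Rightarrow> 'a" where
  "hneg hp zero x = (THE y. zero \<in> hp x y)"

definition hinv :: "('a \<Rightarrow> 'a \<Rightarrow> 'a) \<Rightarrow> 'a \<Rightarrow> 'a \<Rightarrow> 'a \<Rightarrow> 'a" where
  "hinv mul one zero x = (THE y. y \<noteq> zero \<and> mul x y = one)"

definition topological_hyperfield ::
  "'a topology \<Rightarrow> ('a \<Rightarrow> 'a \<Rightarrow> 'a) \<Rightarrow> ('a \<Rightarrow> 'a \<Rightarrow> 'a set) \<Rightarrow> 'a \<Rightarrow> 'a \<Rightarrow> bool" where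
  "topological_hyperfield T mul hp one zero \<longleftrightarrow>
     hyperfield mul hp one zero \<and>
     topspace T = UNIV \<and>
     openin T (UNIV - {zero}) \<and>
     continuous_map (prod_topology T T) T (\<lambda>(x, y). mul x y) \<and>
     continuous_map (subtopology T (UNIV - {zero})) (subtopology T (UNIV - {zero}))
       (hinv mul one zero)"

fun hsum_list :: "('a \<Rightarrow> 'a \<Rightarrow> 'a set) \<Rightarrow> 'a \<Rightarrow> 'a list \<Rightarrow> 'a set" where
  "hsum_list hp zero [] = {zero}"
| "hsum_list hp zero (x # xs) = hset_plus hp {x} (hsum_list hp zero xs)"

definition matroid_bases :: "'e set \<Rightarrow> 'e set set \<Rightarrow> bool" where
  "matroid_bases E \<B> \<longleftrightarrow> finite E \<and> \<B> \<noteq> {} \<and> (\<forall>B\<in>\<B>. B \<subseteq> E) \<and>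
     (\<forall>B1\<in>\<B>. \<forall>B2\<in>\<B>. \<forall>x\<in>B1 - B2. \<exists>y\<in>B2 - B1. insert y (B1 - {x}) \<in> \<B>)"

definition matroid_rank_bases :: "'e set \<Rightarrow> nat \<Rightarrow> 'e set set \<Rightarrow> bool" where
  "matroid_rank_bases E r \<B> \<longleftrightarrow> matroid_bases E \<B> \<and> (\<forall>B\<in>\<B>. card B = r)"

definition ordered_basis :: "'e set set \<Rightarrow> 'e list \<Rightarrow> bool" where
  "ordered_basis \<B> xs \<longleftrightarrow> distinct xs \<and> set xs \<in> \<B>"

text \<open>A function E^r \<rightarrow> F is represented as a function on lists; its domain ii
  tuples (lists) of length r with entries in E. Convention: it is 0 outside the
  domain (extensionality), so functions E^r \<rightarrow> F correspond bijectively.\<close>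

definition tuples :: "'e set \<Rightarrow> nat \<Rightarrow> 'e list set" where
  "tuples E r = {xs. length xs = r \<and> set xs \<subseteq> E}"

definition permute_tuple :: "nat \<Rightarrow> (nat \<Rightarrow> nat) \<Rightarrow> 'e list \<Rightarrow> 'e list" where
  "permute_tuple r \<sigma> xs = map (\<lambda>i. xs ! \<sigma> i) [0..<r]"

definition alternating_on ::
  "('a \<Rightarrow> 'a \<Rightarrow> 'a set) \<Rightarrow> 'a \<Rightarrow> 'e set \<Rightarrow> nat \<Rightarrow> ('e list \<Rightarrow> 'a) \<Rightarrow> bool" where
  "alternating_on hp zero E r \<phi> \<longleftrightarrow>
     (\<forall>xs\<in>tuples E r. \<forall>\<sigma>. \<sigma> permutes {..<r} \<longrightarrow>
        \<phi> (permute_tuple r \<sigma> xs) = (if sign \<sigma> = 1 then \<phi> xs else hneg hp zero (\<phi> xs)))"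

text \<open>The GP relation for i = (i_1..i_{r+1}), j = (j_1..j_{r-1}); with 0-based index k
  the sign (-1)^(k+1) corresponds to (-1)^k with 1-based index.\<close>

definition GP_relation ::
  "('a \<Rightarrow> 'a \<Rightarrow> 'a) \<Rightarrow> ('a \<Rightarrow> 'a \<Rightarrow> 'a set) \<Rightarrow> 'a \<Rightarrow> 'a \<Rightarrow> ('e list \<Rightarrow> 'a)
    \<Rightarrow> 'e list \<Rightarrow> 'e list \<Rightarrow> bool" where
  "GP_relation mul hp one zero \<phi> ii js \<longleftrightarrow>
     zero \<in> hsum_list hp zero
       (map (\<lambda>k. mul (if even (k + 1) then one else hneg hp zero one)
                      (mul (\<phi> (take k ii @ drop (Suc k) ii)) (\<phi> ((ii ! k) # js))))
            [0..<length ii])"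

definition extensional_on :: "'a \<Rightarrow> 'e set \<Rightarrow> nat \<Rightarrow> ('e list \<Rightarrow> 'a) \<Rightarrow> bool" where
  "extensional_on zero E r \<phi> \<longleftrightarrow> (\<forall>xs. xs \<notin> tuples E r \<longrightarrow> \<phi> xs = zero)"

definition strong_GP ::
  "('a \<Rightarrow> 'a \<Rightarrow> 'a) \<Rightarrow> ('a \<Rightarrow> 'a \<Rightarrow> 'a set) \<Rightarrow> 'a \<Rightarrow> 'a \<Rightarrow> 'e set \<Rightarrow> nat
    \<Rightarrow> ('e list \<Rightarrow> 'a) \<Rightarrow> bool" where
  "strong_GP mul hp one zero E r \<phi> \<longleftrightarrow>
     extensional_on zero E r \<phi> \<and>
     (\<exists>xs\<in>tuples E r. \<phi> xs \<noteq> zero) \<and>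
     alternating_on hp zero E r \<phi> \<and>
     (\<forall>ii\<in>tuples E (Suc r). \<forall>js\<in>tuples E (r - 1). GP_relation mul hp one zero \<phi> ii js)"

definition weak_GP ::
  "('a \<Rightarrow> 'a \<Rightarrow> 'a) \<Rightarrow> ('a \<Rightarrow> 'a \<Rightarrow> 'a set) \<Rightarrow> 'a \<Rightarrow> 'a \<Rightarrow> 'e set \<Rightarrow> nat
    \<Rightarrow> ('e list \<Rightarrow> 'a) \<Rightarrow> bool" where
  "weak_GP mul hp one zero E r \<phi> \<longleftrightarrow>
     extensional_on zero E r \<phi> \<and>
     (\<exists>xs\<in>tuples E r. \<phi> xs \<noteq> zero) \<and>
     alternating_on hp zero E r \<phi> \<and>
     (\<exists>\<B>. matroid_bases E \<B> \<and>
        (\<forall>xs\<in>tuples E r. \<phi> xs \<noteq> zero \<longleftrightarrow> ordered_basis \<B> xs)) \<and>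
     (\<forall>ii\<in>tuples E (Suc r). \<forall>js\<in>tuples E (r - 1).
        card (set ii - set js) = 3 \<longrightarrow> GP_relation mul hp one zero \<phi> ii js)"

datatype gp_kind = Strong | Weak

definition GP ::
  "gp_kind \<Rightarrow> ('a \<Rightarrow> 'a \<Rightarrow> 'a) \<Rightarrow> ('a \<Rightarrow> 'a \<Rightarrow> 'a set) \<Rightarrow> 'a \<Rightarrow> 'a \<Rightarrow> 'e set \<Rightarrow> nat
    \<Rightarrow> ('e list \<Rightarrow> 'a) \<Rightarrow> bool" where
  "GP k mul hp one zero E r \<phi> =
     (case k of Strong \<Rightarrow> strong_GP mul hp one zero E r \<phi>
              | Weak \<Rightarrow> weak_GP mul hp one zero E r \<phi>)"

definition proj_class :: "('a \<Rightarrow> 'a \<Rightarrow> 'a) \<Rightarrow> 'a \<Rightarrow> ('e list \<Rightarrow> 'a) \<Rightarrow> ('e list \<Rightarrow> 'a) set" where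
  "proj_class mul zero \<phi> = {(\<lambda>xs. mul \<alpha> (\<phi> xs)) | \<alpha>. \<alpha> \<noteq> zero}"

definition Grassmannian ::
  "gp_kind \<Rightarrow> ('a \<Rightarrow> 'a \<Rightarrow> 'a) \<Rightarrow> ('a \<Rightarrow> 'a \<Rightarrow> 'a set) \<Rightarrow> 'a \<Rightarrow> 'a \<Rightarrow> 'e set \<Rightarrow> nat
    \<Rightarrow> ('e list \<Rightarrow> 'a) set set" where
  "Grassmannian k mul hp one zero E r =
     proj_class mul zero ` {\<phi>. GP k mul hp one zero E r \<phi>}"

definition Real_space ::
  "gp_kind \<Rightarrow> ('a \<Rightarrow> 'a \<Rightarrow> 'a) \<Rightarrow> ('a \<Rightarrow> 'a \<Rightarrow> 'a set) \<Rightarrow> 'a \<Rightarrow> 'a \<Rightarrow> 'e set \<Rightarrow> nat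
    \<Rightarrow> 'e set set \<Rightarrow> ('e list \<Rightarrow> 'a) set set" where
  "Real_space k mul hp one zero E r \<B> =
     proj_class mul zero ` {\<phi>. GP k mul hp one zero E r \<phi> \<and>
        (\<forall>xs\<in>tuples E r. \<phi> xs \<noteq> zero \<longleftrightarrow> ordered_basis \<B> xs)}"

end

theory Submission
  imports Defs
begin

text \<open>Multiplying a Grassmann--Pluecker function by a nonzero constant \<open>\<alpha>\<close> and by the torus
  action \<open>\<phi>(x\<^sub>1,\<dots>,x\<^sub>r) \<mapsto> t(x\<^sub>1)\<cdots>t(x\<^sub>r) \<phi>(x\<^sub>1,\<dots>,x\<^sub>r)\<close>, \<open>t(e) \<noteq> 0\<close>, multiplies every
  summand of a Grassmann--Pluecker relation by the same nonzero factor, so it preserves the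
  relations, alternation and the support. A distinct \<open>r\<close>-tuple in the \<open>(r+1)\<close>-set \<open>A\<close> has
  underlying set \<open>A - {a}\<close> for a unique \<open>a\<close>, and its value gets multiplied by \<open>\<alpha>\<close> times the
  product of \<open>t\<close> over \<open>A - {a}\<close>. Taking \<open>t = 1/u\<close> on \<open>A\<close> and \<open>\<alpha>\<close> the product of \<open>u\<close> over \<open>A\<close>
  makes this factor \<open>u(a)\<close>, which is free. So any realization of \<open>M\<close> can be rescaled to agree
  with the prescribed function on one ordering of each basis inside \<open>A\<close>, and alternation gives
  agreement on all orderings.\<close>

lemma tuple_of_distinct_omits_one:
  assumes "finite A" "card A = Suc r" "xs \<in> tuples A r" "distinct xs"
  shows "\<exists>a\<in>A. set xs = A - {a}"
proof -
  have "set xs \<subseteq> A" "card (set xs) = r"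
    using assms(3,4) by (auto simp: tuples_def distinct_card)
  then have "card (A - set xs) = 1"
    using assms(1,2) by (simp add: card_Diff_subset finite_subset)
  then obtain a where "A - set xs = {a}"
    using card_1_singletonE by blast
  then show ?thesis
    using \<open>set xs \<subseteq> A\<close> by blast
qed

lemma alternating_on_mono:
  "alternating_on hp zero E r \<phi> \<Longrightarrow> A \<subseteq> E \<Longrightarrow> alternating_on hp zero A r \<phi>"
  by (auto simp: alternating_on_def tuples_def)

lemma alternating_on_eq_permutation:
  assumes "alternating_on hp zero A r \<phi>" "alternating_on hp zero A r \<psi>"
    and "xs \<in> tuples A r" "mset ys = mset xs" "\<phi> xs = \<psi> xs"
  shows "\<phi> ys = \<psi> ys"
proof -
  obtain \<sigma> where \<sigma>: "\<sigma> permutes {..<length xs}" "permute_list \<sigma> xs = ys"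
    using assms(4) by (rule mset_eq_permutation)
  have "length xs = r"
    using assms(3) by (simp add: tuples_def)
  then have "permute_tuple r \<sigma> xs = ys" "\<sigma> permutes {..<r}"
    using \<sigma> by (simp_all add: permute_tuple_def permute_list_def)
  then show ?thesis
    using assms(1,2,3,5) unfolding alternating_on_def by metis
qed

locale hfield =
  fixes mul :: "'a \<Rightarrow> 'a \<Rightarrow> 'a" and hp :: "'a \<Rightarrow> 'a \<Rightarrow> 'a set" and one zero :: 'a
  assumes mul_commute: "mul x y = mul y x"
    and mul_assoc_nonzero:
      "x \<noteq> zero \<Longrightarrow> y \<noteq> zero \<Longrightarrow> z \<noteq> zero \<Longrightarrow> mul (mul x y) z = mul x (mul y z)"
    and mul_one_left_nonzero: "x \<noteq> zero \<Longrightarrow> mul one x = x"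
    and mul_zero_left [simp]: "mul zero x = zero"
    and mul_nonzero: "x \<noteq> zero \<Longrightarrow> y \<noteq> zero \<Longrightarrow> mul x y \<noteq> zero"
    and one_neq_zero: "one \<noteq> zero"
    and ex_inverse: "x \<noteq> zero \<Longrightarrow> \<exists>y. y \<noteq> zero \<and> mul x y = one"
    and mul_hplus_distrib: "mul x ` hp y z = hp (mul x y) (mul x z)"
    and ex1_zero_in_hp: "\<exists>!y. zero \<in> hp x y"

lemma hfield_if_hyperfield:
  assumes "hyperfield mul hp one zero"
  shows "hfield mul hp one zero"
proof -
  have "(\<forall>x y. mul x y = mul y x) \<and>
      (\<forall>x y z. x \<noteq> zero \<longrightarrow> y \<noteq> zero \<longrightarrow> z \<noteq> zero \<longrightarrow> mul (mul x y) z = mul x (mul y z)) \<and>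
      (\<forall>x. x \<noteq> zero \<longrightarrow> mul one x = x) \<and> (\<forall>x. mul zero x = zero) \<and>
      (\<forall>x y. x \<noteq> zero \<longrightarrow> y \<noteq> zero \<longrightarrow> mul x y \<noteq> zero) \<and> one \<noteq> zero \<and>
      (\<forall>x. x \<noteq> zero \<longrightarrow> (\<exists>y. y \<noteq> zero \<and> mul x y = one)) \<and>
      (\<forall>x y z. mul x ` hp y z = hp (mul x y) (mul x z)) \<and> (\<forall>x. \<exists>!y. zero \<in> hp x y)"
    using assms unfolding hyperfield_def by (elim conjE) (intro conjI; assumption)
  then show ?thesis
    by unfold_locales auto
qed

context hfield
begin

lemma mul_zero_right [simp]: "mul x zero = zero"
  using mul_commute mul_zero_left by metis

lemma mul_assoc: "mul (mul x y) z = mul x (mul y z)"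
  by (cases "x = zero \<or> y = zero \<or> z = zero") (auto simp: mul_assoc_nonzero)

lemma mul_one_left: "mul one x = x"
  by (cases "x = zero") (simp_all add: mul_one_left_nonzero)

sublocale mult: comm_monoid_mset mul one
  by unfold_locales (simp_all add: mul_assoc mul_commute[of _ one] mul_one_left,
      rule mul_commute)

lemma hneg_unique: "zero \<in> hp x y \<Longrightarrow> hneg hp zero x = y"
  unfolding hneg_def using ex1_zero_in_hp by (rule the1_equality)

lemma zero_in_hp_hneg: "zero \<in> hp x (hneg hp zero x)"
  unfolding hneg_def using ex1_zero_in_hp by (rule theI')

lemma mul_hneg: "mul c (hneg hp zero y) = hneg hp zero (mul c y)"
proof -
  have "mul c zero \<in> mul c ` hp y (hneg hp zero y)"
    using zero_in_hp_hneg by blast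
  then show ?thesis
    by (simp add: mul_hplus_distrib hneg_unique)
qed

lemma hsum_list_map_mul: "hsum_list hp zero (map (mul c) xs) = mul c ` hsum_list hp zero xs"
  by (induction xs) (simp_all add: hset_plus_def mul_hplus_distrib[symmetric] image_UN)

lemma mult_F_nonzero: "(\<And>x. x \<in># N \<Longrightarrow> x \<noteq> zero) \<Longrightarrow> mult.F N \<noteq> zero"
  by (induction N) (auto simp: one_neq_zero mul_nonzero)

definition rescale :: "'a \<Rightarrow> ('e \<Rightarrow> 'a) \<Rightarrow> ('e list \<Rightarrow> 'a) \<Rightarrow> 'e list \<Rightarrow> 'a" where
  "rescale \<alpha> t \<phi> xs = mul (mul \<alpha> (mult.F (image_mset t (mset xs)))) (\<phi> xs)"

context
  fixes \<alpha> :: 'a and t :: "'e \<Rightarrow> 'a"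
  assumes alpha_nonzero: "\<alpha> \<noteq> zero" and t_nonzero: "\<And>e. t e \<noteq> zero"
begin

lemma rescale_factor_nonzero: "mul \<alpha> (mult.F (image_mset t (mset xs))) \<noteq> zero"
  using alpha_nonzero t_nonzero by (intro mul_nonzero mult_F_nonzero) auto

lemma rescale_eq_zero_iff: "rescale \<alpha> t \<phi> xs = zero \<longleftrightarrow> \<phi> xs = zero"
  by (cases "\<phi> xs = zero") (simp_all add: rescale_def mul_nonzero[OF rescale_factor_nonzero])

lemma extensional_on_rescale:
  "extensional_on zero E r \<phi> \<Longrightarrow> extensional_on zero E r (rescale \<alpha> t \<phi>)"
  by (simp add: extensional_on_def rescale_eq_zero_iff)

lemma alternating_on_rescale:
  assumes "alternating_on hp zero E r \<phi>"
  shows "alternating_on hp zero E r (rescale \<alpha> t \<phi>)"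
  unfolding alternating_on_def
proof (intro ballI allI impI)
  fix xs \<sigma> assume xs: "xs \<in> tuples E r" and \<sigma>: "\<sigma> permutes {..<r}"
  have "permute_tuple r \<sigma> xs = permute_list \<sigma> xs"
    using xs by (simp add: tuples_def permute_tuple_def permute_list_def)
  then have "mset (permute_tuple r \<sigma> xs) = mset xs"
    using xs \<sigma> by (simp add: tuples_def)
  then show "rescale \<alpha> t \<phi> (permute_tuple r \<sigma> xs) =
      (if sign \<sigma> = 1 then rescale \<alpha> t \<phi> xs else hneg hp zero (rescale \<alpha> t \<phi> xs))"
    using assms xs \<sigma> by (simp add: alternating_on_def rescale_def mul_hneg)
qed

text \<open>The \<open>k\<close>-th summand of the relation involves \<open>ii\<close> without its \<open>k\<close>-th entry and \<open>ii ! k # js\<close>;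
  together these contain the multiset \<open>ii + js\<close>, independently of \<open>k\<close>.\<close>

lemma GP_relation_rescale:
  assumes "GP_relation mul hp one zero \<phi> ii js"
  shows "GP_relation mul hp one zero (rescale \<alpha> t \<phi>) ii js"
proof -
  define W where "W = mul \<alpha> (mul \<alpha> (mult.F (image_mset t (mset ii + mset js))))"
  define summand where "summand \<psi> = (\<lambda>k. mul (if even (k + 1) then one else hneg hp zero one)
      (mul (\<psi> (take k ii @ drop (Suc k) ii)) (\<psi> ((ii ! k) # js))))" for \<psi>
  have summand_rescale: "summand (rescale \<alpha> t \<phi>) k = mul W (summand \<phi> k)" if "k < length ii" for k
  proof -
    have "mset ii = mset (take k ii @ ii ! k # drop (Suc k) ii)"
      using id_take_nth_drop[OF that] by (rule arg_cong)
    then have "mset ii + mset js = mset (take k ii @ drop (Suc k) ii) + mset (ii ! k # js)"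
      by simp
    then show ?thesis
      by (simp add: summand_def rescale_def W_def mult.union mult.assoc mult.commute mult.left_commute)
  qed
  have "zero \<in> hsum_list hp zero (map (summand \<phi>) [0..<length ii])"
    using assms unfolding GP_relation_def summand_def .
  moreover have "map (summand (rescale \<alpha> t \<phi>)) [0..<length ii] =
      map (mul W) (map (summand \<phi>) [0..<length ii])"
    by (simp add: summand_rescale cong: map_cong)
  ultimately have "zero \<in> hsum_list hp zero (map (summand (rescale \<alpha> t \<phi>)) [0..<length ii])"
    by (metis hsum_list_map_mul image_eqI mul_zero_right)
  then show ?thesis
    unfolding GP_relation_def summand_def .
qed

lemma GP_rescale:
  assumes "GP k mul hp one zero E r \<phi>"
  shows "GP k mul hp one zero E r (rescale \<alpha> t \<phi>)"
proof (cases k)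
  case Strong
  then show ?thesis
    using assms extensional_on_rescale alternating_on_rescale GP_relation_rescale
    by (simp add: GP_def strong_GP_def rescale_eq_zero_iff)
next
  case Weak
  then show ?thesis
    using assms extensional_on_rescale alternating_on_rescale GP_relation_rescale
    by (simp add: GP_def weak_GP_def rescale_eq_zero_iff)
qed

end

lemma ex_rescale_prescribing_values:
  assumes finite: "finite A" and card: "card A = Suc r"
    and alt_\<phi>: "alternating_on hp zero A r \<phi>" and alt_\<psi>: "alternating_on hp zero A r \<psi>"
    and support: "\<forall>xs\<in>tuples A r. \<psi> xs \<noteq> zero \<longleftrightarrow> \<phi> xs \<noteq> zero"
    and distinct: "\<forall>xs\<in>tuples A r. \<phi> xs \<noteq> zero \<longrightarrow> distinct xs"
  shows "\<exists>\<alpha> t. \<alpha> \<noteq> zero \<and> (\<forall>e. t e \<noteq> zero) \<and> (\<forall>xs\<in>tuples A r. rescale \<alpha> t \<phi> xs = \<psi> xs)"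
proof -
  obtain inv where inv: "\<And>x. x \<noteq> zero \<Longrightarrow> inv x \<noteq> zero \<and> mul x (inv x) = one"
    using ex_inverse by metis
  define omit where "omit a = (SOME ys. distinct ys \<and> set ys = A - {a})" for a
  have omit: "distinct (omit a) \<and> set (omit a) = A - {a}" for a
    unfolding omit_def by (rule someI_ex) (use finite finite_distinct_list in blast)
  have omit_tuple: "omit a \<in> tuples A r" if "a \<in> A" for a
    using omit[of a] that finite card by (auto simp: tuples_def distinct_card[symmetric])
  define u where "u a = (if \<phi> (omit a) = zero then one else mul (\<psi> (omit a)) (inv (\<phi> (omit a))))"
    for a
  have u_nonzero: "u a \<noteq> zero" if "a \<in> A" for a
    using that support omit_tuple inv one_neq_zero mul_nonzero unfolding u_def by metis
  define t where "t e = (if e \<in> A then inv (u e) else one)" for e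
  have t_nonzero: "t e \<noteq> zero" for e
    using u_nonzero inv one_neq_zero by (simp add: t_def)
  define \<alpha> where "\<alpha> = mult.F (image_mset u (mset_set A))"
  have \<alpha>_nonzero: "\<alpha> \<noteq> zero"
    unfolding \<alpha>_def using finite u_nonzero by (intro mult_F_nonzero) auto
  have factor: "mul \<alpha> (mult.F (image_mset t (mset (omit a)))) = u a" if "a \<in> A" for a
  proof -
    have "image_mset (\<lambda>e. mul (u e) (t e)) (mset_set (A - {a})) = image_mset (\<lambda>_. one) (mset_set (A - {a}))"
      using finite u_nonzero inv by (intro image_mset_cong) (simp add: t_def)
    then have "mult.F (image_mset (\<lambda>e. mul (u e) (t e)) (mset_set (A - {a}))) = one"
      by simp
    then have "mul (mult.F (image_mset u (mset_set (A - {a})))) (mult.F (image_mset t (mset_set (A - {a})))) = one"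
      by (simp add: mult.distrib)
    moreover have "\<alpha> = mul (u a) (mult.F (image_mset u (mset_set (A - {a}))))"
      unfolding \<alpha>_def using mset_set.remove[OF finite that] by simp
    ultimately show ?thesis
      using omit[of a] by (metis mset_set_set mult.assoc mult.right_neutral)
  qed
  have on_omit: "rescale \<alpha> t \<phi> (omit a) = \<psi> (omit a)" if "a \<in> A" for a
  proof (cases "\<phi> (omit a) = zero")
    case True
    then show ?thesis
      using support omit_tuple[OF that] by (auto simp: rescale_def)
  next
    case False
    then show ?thesis
      using factor[OF that] inv[OF False]
      by (simp add: rescale_def u_def) (metis mult.assoc mult.commute mult.right_neutral)
  qed
  have "rescale \<alpha> t \<phi> xs = \<psi> xs" if xs: "xs \<in> tuples A r" for xs
  proof (cases "\<phi> xs = zero")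
    case True
    then show ?thesis
      using support xs rescale_eq_zero_iff[of \<alpha> t, OF \<alpha>_nonzero t_nonzero] by auto
  next
    case False
    then obtain a where a: "a \<in> A" "set xs = A - {a}"
      using tuple_of_distinct_omits_one[OF finite card xs] distinct xs by blast
    then have "mset xs = mset (omit a)"
      using omit[of a] distinct xs False by (metis mset_set_set)
    then show ?thesis
      using alternating_on_eq_permutation[OF alternating_on_rescale[of \<alpha> t, OF \<alpha>_nonzero t_nonzero alt_\<phi>]
          alt_\<psi> omit_tuple[OF a(1)]] on_omit[OF a(1)] by simp
  qed
  then show ?thesis
    using \<alpha>_nonzero t_nonzero by blast
qed

end

theorem lemma5p8:
  fixes T :: "'a topology"
    and mul :: "'a \<Rightarrow> 'a \<Rightarrow> 'a" and hp :: "'a \<Rightarrow> 'a \<Rightarrow> 'a set"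
    and one zero :: 'a
    and k :: gp_kind
    and E :: "'e set" and r :: nat and \<B> :: "'e set set"
    and A :: "'e set" and \<phi>t :: "'e list \<Rightarrow> 'a"
  assumes "topological_hyperfield T mul hp one zero"
    and "finite E"
    and "matroid_rank_bases E r \<B>"
    and "Real_space k mul hp one zero E r \<B> \<noteq> {}"
    and "A \<subseteq> E" and "card A = r + 1"
    and "alternating_on hp zero A r \<phi>t"
    and "\<forall>xs\<in>tuples A r. \<phi>t xs \<noteq> zero \<longleftrightarrow> ordered_basis \<B> xs"
  shows "\<exists>\<phi>. GP k mul hp one zero E r \<phi> \<and>
           (\<forall>xs\<in>tuples A r. \<phi> xs = \<phi>t xs) \<and>
           proj_class mul zero \<phi> \<in> Real_space k mul hp one zero E r \<B>"
proof -
  interpret hfield mul hp one zero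
    using assms(1) by (simp add: topological_hyperfield_def hfield_if_hyperfield)
  obtain \<phi>0 where GP: "GP k mul hp one zero E r \<phi>0"
    and support: "\<forall>xs\<in>tuples E r. \<phi>0 xs \<noteq> zero \<longleftrightarrow> ordered_basis \<B> xs"
    using assms(4) unfolding Real_space_def by blast
  have tuples_A: "tuples A r \<subseteq> tuples E r"
    using assms(5) by (auto simp: tuples_def)
  have alt: "alternating_on hp zero A r \<phi>0"
    using GP assms(5) by (cases k) (auto simp: GP_def strong_GP_def weak_GP_def alternating_on_mono)
  have finite: "finite A"
    using assms(2,5) finite_subset by blast
  have card: "card A = Suc r"
    using assms(6) by simp
  have "\<forall>xs\<in>tuples A r. \<phi>t xs \<noteq> zero \<longleftrightarrow> \<phi>0 xs \<noteq> zero"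
    using assms(8) support tuples_A by blast
  moreover have "\<forall>xs\<in>tuples A r. \<phi>0 xs \<noteq> zero \<longrightarrow> distinct xs"
    using support tuples_A by (auto simp: ordered_basis_def)
  ultimately obtain \<alpha> t where \<alpha>: "\<alpha> \<noteq> zero" and t: "\<forall>e. t e \<noteq> zero"
    and agree: "\<forall>xs\<in>tuples A r. rescale \<alpha> t \<phi>0 xs = \<phi>t xs"
    using ex_rescale_prescribing_values[OF finite card alt assms(7)] by blast
  have "GP k mul hp one zero E r (rescale \<alpha> t \<phi>0)"
    using GP_rescale[OF \<alpha>] t GP by blast
  moreover have "\<forall>xs\<in>tuples E r. rescale \<alpha> t \<phi>0 xs \<noteq> zero \<longleftrightarrow> ordered_basis \<B> xs"
    using rescale_eq_zero_iff[OF \<alpha>] t support by blast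
  ultimately show ?thesis
    using agree unfolding Real_space_def by blast
qed

end
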